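(* Let $S$ be a bounded ordered set. For each $i\in S$ let $\langle P_i;\nu_i\rangle$ be a bounded ordered set with $|P_i|\ge 2$, and assume that there are elements $0,1$ such that $0$ and $1$ are the least and greatest elements of every $P_i$ and $P_i\cap P_j=\{0,1\}$ for all $i\ne j$ in $S$. For $i\le j$ in $S$ let $\psi_{ij}\colon P_i\to P_j$ be $0$-separating $\{0,1\}$-preserving monotone maps with $\psi_{ii}=\mathrm{id}_{P_i}$ and $\psi_{jk}\circ\psi_{ij}=\psi_{ik}$ for $i\le j\le k$. Fix $j\in S$, let $R_j=\bigcup\{P_i: i\le j\}$, let \[\hat\nu_j=\mathrm{quo}_{R_j}\Bigl(\bigcup_{i\le j}\nu_i\ \cup\ \bigcup_{i\le j}\psi_{ij}\ \cup\ \bigcup_{i\le j}\psi_{ij}^{-1}\Bigr),\] where maps are regarded as subsets of $R_j^2$ via their graphs $\psi_{ij}=\{(x,\psi_{ij}(x)):x\in P_i\}$ and $\psi_{ij}^{-1}=\{(\psi_{ij}(x),x):x\in P_i\}$, and let $\hat\Theta_j=\hat\nu_j\cap\hat\nu_j^{-1}$. Then the map \[\kappa_j\colon\langle R_j/\hat\Theta_j;\hat\nu_j/\hat\Theta_j\rangle\to\langle P_j;\nu_j\rangle,\qquad \kappa_j(x/\hat\Theta_j)=\psi_{ij}(x)\ \text{ for } x\in P_i,\ i\le j,\] is well defined and is an order isomorphism.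
   Context: An ordered set is bounded if it has a least and a greatest element. For bounded ordered sets $P,Q$, a map $\psi\colon P\to Q$ is a $\{0,1\}$-preserving monotone map if it maps least element to least element, greatest to greatest, and is order-preserving; it is $0$-separating if moreover only the least element of $P$ maps to the least element of $Q$. A quasiordering on a nonempty set $H$ is a reflexive, transitive relation $\nu\subseteq H^2$; for $X\subseteq H^2$, $\mathrm{quo}_H(X)$ denotes the least quasiordering on $H$ containing $X$. For a quasiordered set $\langle H;\nu\rangle$ with $\Theta=\nu\cap\nu^{-1}$ (an equivalence relation), $H/\Theta$ is ordered by $(x/\Theta,y/\Theta)\in\nu/\Theta$ iff $(x,y)\in\nu$. *)

theory Defs
  imports Main
begin

definition quasiorder_on :: "'a set \<Rightarrow> 'a rel \<Rightarrow> bool" where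
  "quasiorder_on H \<nu> \<longleftrightarrow> \<nu> \<subseteq> H \<times> H \<and> (\<forall>x\<in>H. (x, x) \<in> \<nu>) \<and> trans \<nu>"

definition order_on :: "'a set \<Rightarrow> 'a rel \<Rightarrow> bool" where
  "order_on H \<nu> \<longleftrightarrow> quasiorder_on H \<nu> \<and> antisym \<nu>"

definition is_least :: "'a set \<Rightarrow> 'a rel \<Rightarrow> 'a \<Rightarrow> bool" where
  "is_least H \<nu> z \<longleftrightarrow> z \<in> H \<and> (\<forall>x\<in>H. (z, x) \<in> \<nu>)"

definition is_greatest :: "'a set \<Rightarrow> 'a rel \<Rightarrow> 'a \<Rightarrow> bool" where
  "is_greatest H \<nu> z \<longleftrightarrow> z \<in> H \<and> (\<forall>x\<in>H. (x, z) \<in> \<nu>)"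

definition bounded_order :: "'a set \<Rightarrow> 'a rel \<Rightarrow> bool" where
  "bounded_order H \<nu> \<longleftrightarrow> order_on H \<nu> \<and> (\<exists>z. is_least H \<nu> z) \<and> (\<exists>u. is_greatest H \<nu> u)"

definition mono_01 :: "'a set \<Rightarrow> 'a rel \<Rightarrow> 'b set \<Rightarrow> 'b rel \<Rightarrow> ('a \<Rightarrow> 'b) \<Rightarrow> bool" where
  "mono_01 P \<nu> Q \<mu> f \<longleftrightarrow> f ` P \<subseteq> Q
     \<and> (\<forall>z. is_least P \<nu> z \<longrightarrow> is_least Q \<mu> (f z))
     \<and> (\<forall>u. is_greatest P \<nu> u \<longrightarrow> is_greatest Q \<mu> (f u))
     \<and> (\<forall>x\<in>P. \<forall>y\<in>P. (x, y) \<in> \<nu> \<longrightarrow> (f x, f y) \<in> \<mu>)"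

definition zero_separating :: "'a set \<Rightarrow> 'a rel \<Rightarrow> 'b set \<Rightarrow> 'b rel \<Rightarrow> ('a \<Rightarrow> 'b) \<Rightarrow> bool" where
  "zero_separating P \<nu> Q \<mu> f \<longleftrightarrow> mono_01 P \<nu> Q \<mu> f
     \<and> (\<forall>x\<in>P. is_least Q \<mu> (f x) \<longrightarrow> is_least P \<nu> x)"

definition quo :: "'a set \<Rightarrow> 'a rel \<Rightarrow> 'a rel" where
  "quo H X = \<Inter> {\<nu>. quasiorder_on H \<nu> \<and> X \<subseteq> \<nu>}"

definition quot_order :: "'a rel \<Rightarrow> 'a rel \<Rightarrow> 'a set rel" where
  "quot_order \<nu> \<Theta> = {(\<Theta> `` {x}, \<Theta> `` {y}) | x y. (x, y) \<in> \<nu>}"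

definition order_iso :: "'a set \<Rightarrow> 'a rel \<Rightarrow> 'b set \<Rightarrow> 'b rel \<Rightarrow> ('a \<Rightarrow> 'b) \<Rightarrow> bool" where
  "order_iso A r B s f \<longleftrightarrow> bij_betw f A B \<and> (\<forall>x\<in>A. \<forall>y\<in>A. (x, y) \<in> r \<longleftrightarrow> (f x, f y) \<in> s)"

end

theory Submission
  imports Defs
begin

(* The pieces P_i, i <= j, meet only in 0 and 1, which every psi_ij fixes, so the maps
   psi_ij glue to a single map g from R_j onto P_j (onto because psi_jj = id).  The preimage
   of nu_j under g is a quasiorder containing all generators of nu-hat_j; conversely, if
   g x <= g y then x <= g x <= g y <= y is a chain of generators.  So nu-hat_j is the
   preimage of nu_j under g, Theta-hat_j is the kernel of g, and kappa_j is the map induced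
   by g. *)

lemma is_least_unique: "antisym \<nu> \<Longrightarrow> is_least H \<nu> a \<Longrightarrow> is_least H \<nu> b \<Longrightarrow> a = b"
  unfolding is_least_def antisym_def by blast

lemma is_greatest_unique: "antisym \<nu> \<Longrightarrow> is_greatest H \<nu> a \<Longrightarrow> is_greatest H \<nu> b \<Longrightarrow> a = b"
  unfolding is_greatest_def antisym_def by blast

lemma mono_01_least:
  assumes "mono_01 P \<nu> Q \<mu> f" "antisym \<mu>" "is_least P \<nu> z" "is_least Q \<mu> z'"
  shows "f z = z'"
  using assms is_least_unique unfolding mono_01_def by metis

lemma mono_01_greatest:
  assumes "mono_01 P \<nu> Q \<mu> f" "antisym \<mu>" "is_greatest P \<nu> u" "is_greatest Q \<mu> u'"
  shows "f u = u'"
  using assms is_greatest_unique unfolding mono_01_def by metis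

lemma quo_least: "quasiorder_on H \<nu> \<Longrightarrow> X \<subseteq> \<nu> \<Longrightarrow> quo H X \<subseteq> \<nu>"
  unfolding quo_def by blast

lemma subset_quo: "X \<subseteq> quo H X"
  unfolding quo_def by (rule Inter_greatest) simp

lemma trans_quo: "trans (quo H X)"
proof (rule transI)
  fix x y z assume xy: "(x, y) \<in> quo H X" and yz: "(y, z) \<in> quo H X"
  show "(x, z) \<in> quo H X"
    unfolding quo_def
  proof (rule InterI)
    fix \<nu> assume \<nu>: "\<nu> \<in> {\<nu>. quasiorder_on H \<nu> \<and> X \<subseteq> \<nu>}"
    then have "(x, y) \<in> \<nu>" "(y, z) \<in> \<nu>" using xy yz unfolding quo_def by blast+
    then show "(x, z) \<in> \<nu>" using \<nu> unfolding quasiorder_on_def by (blast dest: transD)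
  qed
qed

lemma quasiorder_on_inv_image:
  "quasiorder_on Q \<mu> \<Longrightarrow> g ` H \<subseteq> Q \<Longrightarrow> quasiorder_on H (inv_image \<mu> g \<inter> H \<times> H)"
  unfolding quasiorder_on_def by (auto simp: trans_def inv_image_def)

lemma quo_eq_inv_image:
  assumes \<mu>: "quasiorder_on Q \<mu>" and g: "g ` H \<subseteq> Q"
    and X: "X \<subseteq> inv_image \<mu> g \<inter> H \<times> H" and \<mu>_X: "\<mu> \<subseteq> X"
    and g_X: "\<And>x. x \<in> H \<Longrightarrow> (x, g x) \<in> X \<and> (g x, x) \<in> X"
  shows "quo H X = inv_image \<mu> g \<inter> H \<times> H"
proof
  show "quo H X \<subseteq> inv_image \<mu> g \<inter> H \<times> H"
    using quo_least quasiorder_on_inv_image[OF \<mu> g] X by blast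
  show "inv_image \<mu> g \<inter> H \<times> H \<subseteq> quo H X"
  proof clarify
    fix x y assume "(x, y) \<in> inv_image \<mu> g" "x \<in> H" "y \<in> H"
    then have "(x, g x) \<in> X" "(g x, g y) \<in> X" "(g y, y) \<in> X"
      using g_X \<mu>_X by auto
    then show "(x, y) \<in> quo H X"
      using subset_quo[of X H] trans_quo[of H X] by (meson subsetD transD)
  qed
qed

lemma sym_part_inv_image:
  assumes "order_on Q \<mu>" "g ` H \<subseteq> Q" "\<nu> = inv_image \<mu> g \<inter> H \<times> H"
  shows "\<nu> \<inter> \<nu>\<inverse> = {(x, y). x \<in> H \<and> y \<in> H \<and> g x = g y}"
  using assms unfolding order_on_def quasiorder_on_def by (auto dest: antisymD)

lemma order_iso_quotient_inv_image:
  assumes \<mu>: "order_on Q \<mu>" and g: "g ` H = Q"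
    and \<nu>: "\<nu> = inv_image \<mu> g \<inter> H \<times> H" and \<Theta>: "\<Theta> = \<nu> \<inter> \<nu>\<inverse>"
  shows "\<exists>\<kappa>. (\<forall>x\<in>H. \<kappa> (\<Theta> `` {x}) = g x) \<and> order_iso (H // \<Theta>) (quot_order \<nu> \<Theta>) Q \<mu> \<kappa>"
proof (intro exI conjI ballI)
  have \<Theta>_eq: "\<Theta> = {(x, y). x \<in> H \<and> y \<in> H \<and> g x = g y}"
    using sym_part_inv_image[OF \<mu> _ \<nu>] g unfolding \<Theta> by simp
  have classes: "\<Theta> `` {x} = {y \<in> H. g y = g x}" if "x \<in> H" for x
    using that unfolding \<Theta>_eq by auto
  have class_eq: "\<Theta> `` {x} = \<Theta> `` {y} \<longleftrightarrow> g x = g y" if "x \<in> H" "y \<in> H" for x y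
    using that unfolding classes[OF that(1)] classes[OF that(2)] by auto
  show \<kappa>: "the_elem (g ` \<Theta> `` {x}) = g x" if "x \<in> H" for x
    using that unfolding classes[OF that] by (auto intro: the_elem_image_unique)
  show "order_iso (H // \<Theta>) (quot_order \<nu> \<Theta>) Q \<mu> (\<lambda>C. the_elem (g ` C))"
    unfolding order_iso_def bij_betw_def
  proof (intro conjI ballI)
    show "inj_on (\<lambda>C. the_elem (g ` C)) (H // \<Theta>)"
    proof (rule inj_onI)
      fix A B assume "A \<in> H // \<Theta>" "B \<in> H // \<Theta>" "the_elem (g ` A) = the_elem (g ` B)"
      then show "A = B"
        by (elim quotientE) (simp add: \<kappa> class_eq)
    qed
    show "(\<lambda>C. the_elem (g ` C)) ` (H // \<Theta>) = Q"
    proof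
      show "(\<lambda>C. the_elem (g ` C)) ` (H // \<Theta>) \<subseteq> Q"
        using g \<kappa> by (auto elim!: quotientE)
      show "Q \<subseteq> (\<lambda>C. the_elem (g ` C)) ` (H // \<Theta>)"
      proof
        fix q assume "q \<in> Q"
        then obtain x where "x \<in> H" "q = g x" using g by blast
        then show "q \<in> (\<lambda>C. the_elem (g ` C)) ` (H // \<Theta>)"
          using \<kappa> quotientI by (metis image_eqI)
      qed
    qed
    fix A B assume "A \<in> H // \<Theta>" "B \<in> H // \<Theta>"
    then obtain x y where xy: "x \<in> H" "y \<in> H" "A = \<Theta> `` {x}" "B = \<Theta> `` {y}"
      by (metis quotientE)
    have "(A, B) \<in> quot_order \<nu> \<Theta> \<longleftrightarrow> (g x, g y) \<in> \<mu>"
    proof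
      assume "(A, B) \<in> quot_order \<nu> \<Theta>"
      then obtain x' y' where x'y': "A = \<Theta> `` {x'}" "B = \<Theta> `` {y'}" "(x', y') \<in> \<nu>"
        unfolding quot_order_def by blast
      then have "x' \<in> H" "y' \<in> H" "(g x', g y') \<in> \<mu>"
        using \<nu> by auto
      moreover have "g x' = g x" "g y' = g y"
        using class_eq x'y' xy \<open>x' \<in> H\<close> \<open>y' \<in> H\<close> by metis+
      ultimately show "(g x, g y) \<in> \<mu>"
        by simp
    next
      assume "(g x, g y) \<in> \<mu>"
      then show "(A, B) \<in> quot_order \<nu> \<Theta>"
        using xy \<nu> unfolding quot_order_def by auto
    qed
    then show "(A, B) \<in> quot_order \<nu> \<Theta> \<longleftrightarrow> (the_elem (g ` A), the_elem (g ` B)) \<in> \<mu>"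
      using xy \<kappa> by simp
  qed
qed

locale glued_orders =
  fixes I :: "'i set" and P :: "'i \<Rightarrow> 'a set" and \<nu> :: "'i \<Rightarrow> 'a rel"
    and f :: "'i \<Rightarrow> 'a \<Rightarrow> 'a" and j :: 'i and z0 z1 :: 'a
  assumes apex: "j \<in> I"
    and orders: "i \<in> I \<Longrightarrow> order_on (P i) (\<nu> i)"
    and least: "i \<in> I \<Longrightarrow> is_least (P i) (\<nu> i) z0"
    and greatest: "i \<in> I \<Longrightarrow> is_greatest (P i) (\<nu> i) z1"
    and overlap: "i \<in> I \<Longrightarrow> k \<in> I \<Longrightarrow> i \<noteq> k \<Longrightarrow> P i \<inter> P k \<subseteq> {z0, z1}"
    and maps: "i \<in> I \<Longrightarrow> mono_01 (P i) (\<nu> i) (P j) (\<nu> j) (f i)"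
    and apex_id: "x \<in> P j \<Longrightarrow> f j x = x"
begin

definition carrier :: "'a set" where
  "carrier = \<Union> {P i | i. i \<in> I}"

definition generators :: "'a rel" where
  "generators = \<Union> {\<nu> i | i. i \<in> I}
     \<union> \<Union> {{(x, f i x) | x. x \<in> P i} | i. i \<in> I}
     \<union> \<Union> {{(f i x, x) | x. x \<in> P i} | i. i \<in> I}"

definition glue :: "'a \<Rightarrow> 'a" where
  "glue x = f (SOME i. i \<in> I \<and> x \<in> P i) x"

lemma maps_agree:
  assumes "i \<in> I" "k \<in> I" "x \<in> P i" "x \<in> P k"
  shows "f i x = f k x"
proof (cases "i = k")
  case False
  have "antisym (\<nu> j)"
    using orders[OF apex] unfolding order_on_def by blast
  then have "f l z0 = z0 \<and> f l z1 = z1" if "l \<in> I" for l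
    using mono_01_least[OF maps[OF that]] mono_01_greatest[OF maps[OF that]]
      least greatest apex that by blast
  moreover have "x \<in> {z0, z1}"
    using overlap[OF assms(1,2) False] assms(3,4) by blast
  ultimately show ?thesis
    using assms(1,2) by auto
qed simp

lemma glue_eq:
  assumes "i \<in> I" "x \<in> P i"
  shows "glue x = f i x"
proof -
  have "\<exists>k. k \<in> I \<and> x \<in> P k"
    using assms by blast
  then have "(SOME k. k \<in> I \<and> x \<in> P k) \<in> I \<and> x \<in> P (SOME k. k \<in> I \<and> x \<in> P k)"
    by (rule someI_ex)
  then show ?thesis
    unfolding glue_def using assms maps_agree by blast
qed

lemma P_subset_carrier: "i \<in> I \<Longrightarrow> P i \<subseteq> carrier"
  unfolding carrier_def by blast

lemma map_in_apex: "i \<in> I \<Longrightarrow> x \<in> P i \<Longrightarrow> f i x \<in> P j"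
  using maps unfolding mono_01_def by blast

lemma glue_apex: "y \<in> P j \<Longrightarrow> glue y = y"
  using glue_eq[OF apex] apex_id by simp

lemma apex_refl: "y \<in> P j \<Longrightarrow> (y, y) \<in> \<nu> j"
  using orders[OF apex] unfolding order_on_def quasiorder_on_def by blast

lemma glue_image: "glue ` carrier = P j"
proof
  show "glue ` carrier \<subseteq> P j"
    using map_in_apex glue_eq unfolding carrier_def by auto
  show "P j \<subseteq> glue ` carrier"
  proof
    fix y assume "y \<in> P j"
    then show "y \<in> glue ` carrier"
      using glue_apex P_subset_carrier[OF apex] by (metis image_eqI subsetD)
  qed
qed

lemma generators_order: "i \<in> I \<Longrightarrow> \<nu> i \<subseteq> generators"
  unfolding generators_def by blast

lemma generators_graph: "i \<in> I \<Longrightarrow> x \<in> P i \<Longrightarrow> (x, f i x) \<in> generators \<and> (f i x, x) \<in> generators"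
  unfolding generators_def by blast

lemma generators_subset: "generators \<subseteq> inv_image (\<nu> j) glue \<inter> carrier \<times> carrier"
proof
  fix p assume "p \<in> generators"
  then consider (order) i where "i \<in> I" "p \<in> \<nu> i"
    | (graph) i x where "i \<in> I" "x \<in> P i" "p = (x, f i x) \<or> p = (f i x, x)"
    unfolding generators_def by blast
  then show "p \<in> inv_image (\<nu> j) glue \<inter> carrier \<times> carrier"
  proof cases
    case order
    then obtain x y where "p = (x, y)" "x \<in> P i" "y \<in> P i"
      using orders unfolding order_on_def quasiorder_on_def by blast
    with order show ?thesis
      using maps[of i] glue_eq P_subset_carrier unfolding mono_01_def by auto
  next
    case graph
    have "x \<in> carrier" "f i x \<in> carrier"
      using graph map_in_apex P_subset_carrier apex by blast+
    moreover have "(glue x, glue (f i x)) \<in> \<nu> j \<and> (glue (f i x), glue x) \<in> \<nu> j"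
      using graph map_in_apex glue_eq glue_apex apex_refl by simp
    ultimately show ?thesis
      using graph by auto
  qed
qed

lemma quo_generators: "quo carrier generators = inv_image (\<nu> j) glue \<inter> carrier \<times> carrier"
proof (rule quo_eq_inv_image[OF _ _ generators_subset generators_order[OF apex]])
  show "quasiorder_on (P j) (\<nu> j)"
    using orders[OF apex] unfolding order_on_def by blast
  show "glue ` carrier \<subseteq> P j"
    using glue_image by simp
  fix x assume "x \<in> carrier"
  then obtain i where "i \<in> I" "x \<in> P i"
    unfolding carrier_def by blast
  then show "(x, glue x) \<in> generators \<and> (glue x, x) \<in> generators"
    using glue_eq generators_graph by simp
qed

theorem quotient_order_iso:
  "let \<nu>hat = quo carrier generators; \<Theta>hat = \<nu>hat \<inter> \<nu>hat\<inverse>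
   in \<exists>\<kappa>. (\<forall>i\<in>I. \<forall>x\<in>P i. \<kappa> (\<Theta>hat `` {x}) = f i x)
        \<and> order_iso (carrier // \<Theta>hat) (quot_order \<nu>hat \<Theta>hat) (P j) (\<nu> j) \<kappa>"
proof -
  define \<nu>hat where "\<nu>hat = quo carrier generators"
  define \<Theta>hat where "\<Theta>hat = \<nu>hat \<inter> \<nu>hat\<inverse>"
  obtain \<kappa> where \<kappa>: "\<forall>x\<in>carrier. \<kappa> (\<Theta>hat `` {x}) = glue x"
    and iso: "order_iso (carrier // \<Theta>hat) (quot_order \<nu>hat \<Theta>hat) (P j) (\<nu> j) \<kappa>"
    using order_iso_quotient_inv_image[OF orders[OF apex] glue_image _ \<Theta>hat_def]
      quo_generators unfolding \<nu>hat_def by blast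
  have "\<forall>i\<in>I. \<forall>x\<in>P i. \<kappa> (\<Theta>hat `` {x}) = f i x"
    using \<kappa> glue_eq P_subset_carrier by (metis subsetD)
  with iso show ?thesis
    unfolding Let_def \<nu>hat_def \<Theta>hat_def by blast
qed

end

theorem lemma2:
  fixes S :: "'i::order set"
    and P :: "'i \<Rightarrow> 'a set"
    and \<nu> :: "'i \<Rightarrow> 'a rel"
    and \<psi> :: "'i \<Rightarrow> 'i \<Rightarrow> 'a \<Rightarrow> 'a"
    and z0 z1 :: 'a
    and j :: 'i
  assumes S_bounded: "\<exists>b\<in>S. \<exists>t\<in>S. \<forall>i\<in>S. b \<le> i \<and> i \<le> t"
    and P_bounded: "\<forall>i\<in>S. bounded_order (P i) (\<nu> i)"
    and P_card: "\<forall>i\<in>S. \<exists>x\<in>P i. \<exists>y\<in>P i. x \<noteq> y"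
    and P_01: "\<forall>i\<in>S. is_least (P i) (\<nu> i) z0 \<and> is_greatest (P i) (\<nu> i) z1"
    and P_disj: "\<forall>i\<in>S. \<forall>k\<in>S. i \<noteq> k \<longrightarrow> P i \<inter> P k = {z0, z1}"
    and \<psi>_maps: "\<forall>i\<in>S. \<forall>k\<in>S. i \<le> k \<longrightarrow> zero_separating (P i) (\<nu> i) (P k) (\<nu> k) (\<psi> i k)"
    and \<psi>_id: "\<forall>i\<in>S. \<forall>x\<in>P i. \<psi> i i x = x"
    and \<psi>_comp: "\<forall>i\<in>S. \<forall>k\<in>S. \<forall>l\<in>S. i \<le> k \<and> k \<le> l \<longrightarrow>
                   (\<forall>x\<in>P i. \<psi> k l (\<psi> i k x) = \<psi> i l x)"
    and j_in: "j \<in> S"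
  shows "let R = \<Union> {P i | i. i \<in> S \<and> i \<le> j};
             \<nu>hat = quo R (\<Union> {\<nu> i | i. i \<in> S \<and> i \<le> j}
                 \<union> \<Union> {{(x, \<psi> i j x) | x. x \<in> P i} | i. i \<in> S \<and> i \<le> j}
                 \<union> \<Union> {{(\<psi> i j x, x) | x. x \<in> P i} | i. i \<in> S \<and> i \<le> j});
             \<Theta>hat = \<nu>hat \<inter> \<nu>hat\<inverse>
         in \<exists>\<kappa>. (\<forall>i\<in>S. i \<le> j \<longrightarrow> (\<forall>x\<in>P i. \<kappa> (\<Theta>hat `` {x}) = \<psi> i j x))
             \<and> order_iso (R // \<Theta>hat) (quot_order \<nu>hat \<Theta>hat) (P j) (\<nu> j) \<kappa>"
proof -
  interpret glued_orders "{i \<in> S. i \<le> j}" P \<nu> "\<lambda>i. \<psi> i j" j z0 z1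
  proof
    show "j \<in> {i \<in> S. i \<le> j}"
      using j_in by simp
    show "\<psi> j j x = x" if "x \<in> P j" for x
      using \<psi>_id j_in that by blast
    fix i k assume i: "i \<in> {i \<in> S. i \<le> j}"
    show "order_on (P i) (\<nu> i)"
      using P_bounded i unfolding bounded_order_def by blast
    show "is_least (P i) (\<nu> i) z0" "is_greatest (P i) (\<nu> i) z1"
      using P_01 i by blast+
    show "mono_01 (P i) (\<nu> i) (P j) (\<nu> j) (\<psi> i j)"
      using \<psi>_maps i j_in unfolding zero_separating_def by blast
    show "P i \<inter> P k \<subseteq> {z0, z1}" if "k \<in> {i \<in> S. i \<le> j}" "i \<noteq> k"
      using P_disj i that by blast
  qed
  show ?thesis
    using quotient_order_iso unfolding carrier_def generators_def Let_def
    by (simp add: Ball_def imp_conjL)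
qed

end
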